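(* Let $T$ be a finite rooted tree. For each vertex $v$ of $T$ let $n_v$ be the number of vertices of the subtree $T_v$ rooted at $v$, and let $v_1,\dots,v_{\deg(v)}$ be the children of $v$. Define $C_v(x)\in\mathbb{Z}[x]$ inductively by $C_v(x)=x+2$ if $v$ is a leaf, and $C_v(x)=x^{n_v}+2x\prod_{i=1}^{\deg(v)}C_{v_i}(x)+2$ if $v$ is an internal node. Then for every vertex $v$ of $T$, $C_v(x)$ is irreducible over $\mathbb{Q}$.
   Context: $T_v$ consists of $v$ and all its descendants; $\deg(v)$ denotes the number of children of $v$. *)

theory Defs
  imports "HOL-Computational_Algebra.Polynomial_Factorial"
begin

datatype rtree = Node "rtree list"

fun children :: "rtree \<Rightarrow> rtree list" where
  "children (Node ts) = ts"

fun nverts :: "rtree \<Rightarrow> nat" where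
  "nverts (Node ts) = 1 + sum_list (map nverts ts)"

text \<open>The subtrees T_v, for v ranging over the vertices of the tree.\<close>
fun subtrees :: "rtree \<Rightarrow> rtree set" where
  "subtrees (Node ts) = insert (Node ts) (\<Union> (set (map subtrees ts)))"

fun Cpoly :: "rtree \<Rightarrow> int poly" where
  "Cpoly (Node ts) =
     (if ts = [] then [:2, 1:]
      else monom 1 (nverts (Node ts)) + smult 2 ([:0, 1:] * prod_list (map Cpoly ts)) + [:2:])"

end

theory Submission
  imports Defs "Berlekamp_Zassenhaus.Factor_Bound"
begin

text \<open>Writing \<open>n\<close> for the number of vertices of \<open>T\<^sub>v\<close>, every \<open>C\<^sub>v\<close> has the shape
  \<open>x\<^sup>n + 2 x Q(x) + 2\<close> with \<open>deg Q < n\<close>: for a leaf \<open>Q = 0\<close>, and for an internal node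
  \<open>Q\<close> is the product of the \<open>C\<^sub>v\<^sub>i\<close>, whose degrees add up to \<open>n - 1\<close>. Such a polynomial is
  Eisenstein at 2: its leading coefficient is odd, all others are even, and the constant
  term 2 is not divisible by 4. So it is irreducible over \<open>\<int>\<close>, hence over \<open>\<rat>\<close> by Gauss's lemma.\<close>

lemma dvd_coeff_mult_lowest_iff:
  fixes g h :: "'a :: comm_ring_1 poly"
  assumes "\<forall>k<i. p dvd Polynomial.coeff g k" and "\<forall>k<j. p dvd Polynomial.coeff h k"
  shows "p dvd Polynomial.coeff (g * h) (i + j) \<longleftrightarrow> p dvd Polynomial.coeff g i * Polynomial.coeff h j"
proof -
  let ?rest = "\<Sum>k\<in>{..i + j} - {i}. Polynomial.coeff g k * Polynomial.coeff h (i + j - k)"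
  have "Polynomial.coeff (g * h) (i + j) = (\<Sum>k\<le>i + j. Polynomial.coeff g k * Polynomial.coeff h (i + j - k))"
    by (simp add: coeff_mult)
  also have "\<dots> = Polynomial.coeff g i * Polynomial.coeff h j + ?rest"
    by (subst sum.remove[of _ i]) auto
  finally have split: "Polynomial.coeff (g * h) (i + j) = Polynomial.coeff g i * Polynomial.coeff h j + ?rest" .
  have "p dvd ?rest"
  proof (rule dvd_sum)
    fix k assume "k \<in> {..i + j} - {i}"
    then have "k < i \<or> i + j - k < j" by auto
    then show "p dvd Polynomial.coeff g k * Polynomial.coeff h (i + j - k)" using assms by auto
  qed
  then show ?thesis unfolding split by (simp add: dvd_add_left_iff)
qed

lemma eisenstein_dvd_lower_coeffs:
  fixes f g h :: "'a :: idom poly"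
  assumes p: "prime_elem p" and f: "f = g * h"
    and lead: "\<not> p dvd lead_coeff f" and lower: "\<forall>k<degree f. p dvd Polynomial.coeff f k"
    and k: "k < degree g"
  shows "p dvd Polynomial.coeff g k"
proof (rule ccontr)
  assume "\<not> p dvd Polynomial.coeff g k"
  define i where "i = (LEAST i. \<not> p dvd Polynomial.coeff g i)"
  define j where "j = (LEAST j. \<not> p dvd Polynomial.coeff h j)"
  have "g \<noteq> 0" and "h \<noteq> 0"
    using lead f by auto
  have "\<not> p dvd lead_coeff h"
    using lead unfolding f lead_coeff_mult by auto
  then have hj: "\<not> p dvd Polynomial.coeff h j" and "j \<le> degree h"
    unfolding j_def by (fact LeastI, fact Least_le)
  have gi: "\<not> p dvd Polynomial.coeff g i" and "i \<le> k"
    using \<open>\<not> p dvd Polynomial.coeff g k\<close> unfolding i_def by (fact LeastI, fact Least_le)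
  have "\<forall>k<i. p dvd Polynomial.coeff g k" "\<forall>k<j. p dvd Polynomial.coeff h k"
    unfolding i_def j_def using not_less_Least by blast+
  then have "\<not> p dvd Polynomial.coeff f (i + j)"
    using gi hj p unfolding f by (simp add: dvd_coeff_mult_lowest_iff prime_elem_dvd_mult_iff)
  moreover have "i + j < degree f"
    using \<open>i \<le> k\<close> k \<open>j \<le> degree h\<close> \<open>g \<noteq> 0\<close> \<open>h \<noteq> 0\<close>
    unfolding f by (simp add: degree_mult_eq)
  ultimately show False using lower by blast
qed

lemma eisenstein_irreducible\<^sub>d:
  fixes f :: "'a :: idom poly"
  assumes p: "prime_elem p" and deg: "degree f > 0"
    and lead: "\<not> p dvd lead_coeff f" and lower: "\<forall>k<degree f. p dvd Polynomial.coeff f k"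
    and const: "\<not> p\<^sup>2 dvd Polynomial.coeff f 0"
  shows "irreducible\<^sub>d f"
proof (rule irreducible\<^sub>dI[OF deg])
  fix g h :: "'a poly"
  assume "degree g > 0" "degree h > 0" and f: "f = g * h"
  then have "p dvd Polynomial.coeff g 0" "p dvd Polynomial.coeff h 0"
    using eisenstein_dvd_lower_coeffs[OF p f lead lower]
      eisenstein_dvd_lower_coeffs[OF p _ lead lower, of h g] f
    by (auto simp: mult.commute)
  then have "p\<^sup>2 dvd Polynomial.coeff g 0 * Polynomial.coeff h 0"
    by (simp add: power2_eq_square mult_dvd_mono)
  with const show False unfolding f by (simp add: coeff_mult)
qed

lemma coeff_monom_plus_smult_pCons:
  "Polynomial.coeff (Polynomial.monom 1 n + pCons 0 (Polynomial.smult p Q) + [:p:]) k =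
     (if k = n then 1 else 0) + (if k = 0 then p else p * Polynomial.coeff Q (k - 1))"
  by (cases k) (simp_all add: coeff_monom)

lemma degree_monom_plus_smult_pCons:
  fixes p :: "'a :: comm_ring_1"
  assumes p: "\<not> p dvd 1" and Q: "degree Q < n"
  shows "degree (Polynomial.monom 1 n + pCons 0 (Polynomial.smult p Q) + [:p:]) = n" (is "degree ?f = n")
proof (rule antisym)
  have "degree (pCons 0 (Polynomial.smult p Q)) \<le> n"
    using Q degree_pCons_le[of 0 "Polynomial.smult p Q"] degree_smult_le[of p Q] by linarith
  then show "degree ?f \<le> n"
    by (intro degree_add_le degree_monom_le) auto
  have "Polynomial.coeff ?f n = 1 + p * Polynomial.coeff Q (n - 1)"
    using Q unfolding coeff_monom_plus_smult_pCons by simp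
  moreover have "1 + p * c \<noteq> 0" for c
    using p by (metis add_eq_0_iff dvd_minus_iff dvd_triv_left)
  ultimately show "n \<le> degree ?f"
    by (metis le_degree)
qed

lemma irreducible\<^sub>d_monom_plus_smult_pCons:
  fixes p :: "'a :: idom"
  assumes p: "prime_elem p" and Q: "degree Q < n"
  shows "irreducible\<^sub>d (Polynomial.monom 1 n + pCons 0 (Polynomial.smult p Q) + [:p:])" (is "irreducible\<^sub>d ?f")
proof -
  have unit: "\<not> p dvd 1" and "p \<noteq> 0"
    using p by (auto simp: prime_elem_def)
  have deg: "degree ?f = n"
    using degree_monom_plus_smult_pCons[OF unit Q] .
  have "n > 0" using Q by linarith
  show ?thesis
  proof (rule eisenstein_irreducible\<^sub>d[OF p])
    show "degree ?f > 0" using deg \<open>n > 0\<close> by simp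
    have "lead_coeff ?f = 1 + p * Polynomial.coeff Q (n - 1)"
      using deg \<open>n > 0\<close> unfolding coeff_monom_plus_smult_pCons by simp
    then show "\<not> p dvd lead_coeff ?f"
      using unit by (simp add: dvd_add_left_iff)
    show "\<forall>k<degree ?f. p dvd Polynomial.coeff ?f k"
      using deg unfolding coeff_monom_plus_smult_pCons by simp
    have "Polynomial.coeff ?f 0 = p"
      using \<open>n > 0\<close> unfolding coeff_monom_plus_smult_pCons by simp
    then show "\<not> p\<^sup>2 dvd Polynomial.coeff ?f 0"
      using unit \<open>p \<noteq> 0\<close> by (simp add: power2_eq_square)
  qed
qed

lemma Cpoly_eisenstein_form:
  "\<exists>Q. Cpoly t = Polynomial.monom 1 (nverts t) + pCons 0 (Polynomial.smult 2 Q) + [:2:] \<and> degree Q < nverts t"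
proof (induction t rule: Cpoly.induct)
  case (1 ts)
  show ?case
  proof (cases "ts = []")
    case True
    then show ?thesis
      by (intro exI[of _ 0]) (simp add: monom_Suc)
  next
    case False
    have "degree (Cpoly t) = nverts t" if t: "t \<in> set ts" for t
    proof -
      obtain Q where "Cpoly t = Polynomial.monom 1 (nverts t) + pCons 0 (Polynomial.smult 2 Q) + [:2:]"
        and "degree Q < nverts t"
        using "1"[OF False t] by blast
      then show ?thesis by (simp add: degree_monom_plus_smult_pCons)
    qed
    then have "sum_list (map degree (map Cpoly ts)) = sum_list (map nverts ts)"
      by (induction ts) auto
    then have "degree (prod_list (map Cpoly ts)) < nverts (Node ts)"
      using degree_prod_list_le[of "map Cpoly ts"] by simp
    with False show ?thesis
      by (intro exI[of _ "prod_list (map Cpoly ts)"]) simp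
  qed
qed

theorem mainTheorem2:
  fixes T v :: rtree
  assumes "v \<in> subtrees T"
  shows "irreducible (map_poly (of_int :: int \<Rightarrow> rat) (Cpoly v))"
proof -
  obtain Q where "Cpoly v = Polynomial.monom 1 (nverts v) + pCons 0 (Polynomial.smult 2 Q) + [:2:]"
    and "degree Q < nverts v"
    using Cpoly_eisenstein_form by blast
  moreover have "prime_elem (2 :: int)"
    by simp
  ultimately have "irreducible\<^sub>d (Cpoly v)"
    by (simp add: irreducible\<^sub>d_monom_plus_smult_pCons)
  then show ?thesis
    using irreducible\<^sub>d_int_rat by simp
qed

end
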